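(* Let $\tau$ be a type and let $X$ be a finite set of ordinals. There is a construction scheme over $X$ of type $\tau$ if and only if $|X|=m_k$ for some $k\in\omega$. Moreover, if there is a construction scheme over $X$ of type $\tau$, it is unique.
   Context: A type is a sequence $\tau=\{(m_k,n_{k+1},r_{k+1})\}_{k\in\omega}$ of natural numbers with $m_0=1$; $n_k\ge2$ for $k\ge1$; every $r\in\omega$ equals $r_k$ for infinitely many $k$; $m_k>r_{k+1}$; and $m_{k+1}=r_{k+1}+(m_k-r_{k+1})n_{k+1}$ for all $k$. For a set of ordinals $X$ and $\mathcal F\subseteq[X]^{<\omega}$, $\mathcal F_k$ is the set of elements of rank $k$ in the well-founded order $(\mathcal F,\subsetneq)$; $A\sqsubseteq B$ means $A\subseteq B$ and every element of $B$ below an element of $A$ is in $A$; $A<B$ means every element of $A$ is below every element of $B$. $\mathcal F$ is a construction scheme over $X$ of type $\tau$ if (1) every finite subset of $X$ lies in a member of $\mathcal F$; (2) $|F|=m_k$ for $F\in\mathcal F_k$; (3) $E\cap F\sqsubseteq E$ and $E\cap F\sqsubseteq F$ for $E,F\in\mathcal F_k$; (4) each $F\in\mathcal F_{k+1}$ is the union of uniquely determined $F_0,\dots,F_{n_{k+1}-1}\in\mathcal F_k$ forming a $\Delta$-system with root $R(F)$, $|R(F)|=r_{k+1}$, and $R(F)<F_0\setminus R(F)<\dots<F_{n_{k+1}-1}\setminus R(F)$. *)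

theory Defs
  imports Main
begin

text \<open>A type tau = ((m k, n (k+1), r (k+1)))_k is given by three sequences m n r :: nat => nat;
  the values n 0 and r 0 are irrelevant.\<close>

definition is_type :: "(nat \<Rightarrow> nat) \<Rightarrow> (nat \<Rightarrow> nat) \<Rightarrow> (nat \<Rightarrow> nat) \<Rightarrow> bool" where
  "is_type m n r \<longleftrightarrow>
     m 0 = 1 \<and>
     (\<forall>k\<ge>1. n k \<ge> 2) \<and>
     (\<forall>x. infinite {k. k \<ge> 1 \<and> r k = x}) \<and>
     (\<forall>k. m k > r (Suc k)) \<and>
     (\<forall>k. m (Suc k) = r (Suc k) + (m k - r (Suc k)) * n (Suc k))"

text \<open>rank F A = sup { rank F B + 1 : B in F, B proper subset of A } (0 if empty);
  all members of F are finite, so ranks are natural numbers.\<close>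

function fsrank :: "'a set set \<Rightarrow> 'a set \<Rightarrow> nat" where
  "fsrank F A =
     (if finite A then Sup ((\<lambda>B. Suc (fsrank F B)) ` {B. B \<in> F \<and> B \<subset> A}) else 0)"
  by auto
termination
  by (relation "measure (\<lambda>(F, A). card A)") (auto intro: psubset_card_mono)

definition level :: "'a set set \<Rightarrow> nat \<Rightarrow> 'a set set" where
  "level F k = {A \<in> F. fsrank F A = k}"

definition init_seg :: "'a::linorder set \<Rightarrow> 'a set \<Rightarrow> bool" (infix "\<sqsubseteq>" 50) where
  "A \<sqsubseteq> B \<longleftrightarrow> A \<subseteq> B \<and> (\<forall>b\<in>B. \<forall>a\<in>A. b < a \<longrightarrow> b \<in> A)"

definition set_less :: "'a::linorder set \<Rightarrow> 'a set \<Rightarrow> bool" (infix "<\<^sub>s" 50) where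
  "A <\<^sub>s B \<longleftrightarrow> (\<forall>a\<in>A. \<forall>b\<in>B. a < b)"

definition is_decomposition ::
  "'a::linorder set set \<Rightarrow> nat \<Rightarrow> (nat \<Rightarrow> nat) \<Rightarrow> (nat \<Rightarrow> nat) \<Rightarrow> 'a set \<Rightarrow> (nat \<Rightarrow> 'a set) \<Rightarrow> bool" where
  "is_decomposition F k n r A G \<longleftrightarrow>
     (\<forall>i<n (Suc k). G i \<in> level F k) \<and>
     A = (\<Union>i<n (Suc k). G i) \<and>
     (\<exists>R. card R = r (Suc k) \<and>
          (\<forall>i<n (Suc k). \<forall>j<n (Suc k). i \<noteq> j \<longrightarrow> G i \<inter> G j = R) \<and>
          R <\<^sub>s G 0 - R \<and>
          (\<forall>i. Suc i < n (Suc k) \<longrightarrow> G i - R <\<^sub>s G (Suc i) - R))"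

definition construction_scheme ::
  "'a::linorder set \<Rightarrow> (nat \<Rightarrow> nat) \<Rightarrow> (nat \<Rightarrow> nat) \<Rightarrow> (nat \<Rightarrow> nat) \<Rightarrow> 'a set set \<Rightarrow> bool" where
  "construction_scheme X m n r F \<longleftrightarrow>
     F \<subseteq> {A. A \<subseteq> X \<and> finite A} \<and>
     (\<forall>A. A \<subseteq> X \<and> finite A \<longrightarrow> (\<exists>B\<in>F. A \<subseteq> B)) \<and>
     (\<forall>k. \<forall>A\<in>level F k. card A = m k) \<and>
     (\<forall>k. \<forall>E\<in>level F k. \<forall>A\<in>level F k. E \<inter> A \<sqsubseteq> E \<and> E \<inter> A \<sqsubseteq> A) \<and>
     (\<forall>k. \<forall>A\<in>level F (Suc k).
        \<exists>G. is_decomposition F k n r A G \<and>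
            (\<forall>G'. is_decomposition F k n r A G' \<longrightarrow> (\<forall>i<n (Suc k). G' i = G i)))"

end

theory Submission
  imports Defs
begin

text \<open>
  A construction scheme over a finite set X contains X itself, so |X| = m_K where K is the rank
  of X. The decomposition of a member of rank k+1 is forced by the order: its root consists of
  its first r_{k+1} elements, and its i-th piece consists of the root followed by the i-th run
  of m_k - r_{k+1} further elements. Conversely, every member E of rank k is one of these pieces:
  it is contained in the piece P of rank k containing max E, since E \<inter> P is an initial segment
  of E, and both have m_k elements. Hence the levels are determined from the top down by
  repeatedly splitting X in this canonical way, which gives uniqueness. When |X| = m_K the family
  of all canonical splittings is a construction scheme: coherence passes from each level to the
  next because positions are preserved in initial segments.
\<close>

declare fsrank.simps[simp del]

definition position :: "'a::linorder set \<Rightarrow> 'a \<Rightarrow> nat" where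
  "position A x = card {y\<in>A. y < x}"

lemma position_less_position:
  assumes "finite A" "x \<in> A" "x < y"
  shows "position A x < position A y"
  unfolding position_def by (rule psubset_card_mono) (use assms in auto)

lemma position_less_iff:
  assumes "finite A" "x \<in> A" "y \<in> A"
  shows "position A x < position A y \<longleftrightarrow> x < y"
  using position_less_position[OF assms(1,2), of y] position_less_position[OF assms(1,3), of x]
  by (metis less_asym linorder_neqE)

lemma position_less_card:
  assumes "finite A" "x \<in> A"
  shows "position A x < card A"
  unfolding position_def by (rule psubset_card_mono) (use assms in auto)

lemma bij_betw_position:
  assumes "finite A"
  shows "bij_betw (position A) A {..<card A}"
proof -
  have inj: "inj_on (position A) A"
    by (rule inj_onI) (metis assms linorder_neqE less_irrefl position_less_position)
  have "position A ` A \<subseteq> {..<card A}"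
    using position_less_card[OF assms] by auto
  moreover have "card (position A ` A) = card {..<card A}"
    using card_image[OF inj] by simp
  ultimately have "position A ` A = {..<card A}"
    by (simp add: card_subset_eq)
  then show ?thesis
    using inj by (simp add: bij_betw_def)
qed

lemma card_position_filter:
  assumes "finite A"
  shows "card {x\<in>A. P (position A x)} = card {p. p < card A \<and> P p}"
proof -
  have bij: "bij_betw (position A) A {..<card A}"
    by (rule bij_betw_position[OF assms])
  have "position A ` {x\<in>A. P (position A x)} = {p \<in> position A ` A. P p}"
    by blast
  also have "\<dots> = {p. p < card A \<and> P p}"
    using bij_betw_imp_surj_on[OF bij] by auto
  finally have "position A ` {x\<in>A. P (position A x)} = {p. p < card A \<and> P p}" .
  moreover have "inj_on (position A) {x\<in>A. P (position A x)}"
    using bij_betw_imp_inj_on[OF bij] by (rule inj_on_subset) auto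
  ultimately show ?thesis
    using card_image by metis
qed

lemma position_init_seg:
  assumes "I \<sqsubseteq> A" "x \<in> I"
  shows "position A x = position I x"
proof -
  have "{y\<in>A. y < x} = {y\<in>I. y < x}"
    using assms unfolding init_seg_def by auto
  then show ?thesis unfolding position_def by simp
qed

lemma mem_init_seg_iff_position_less:
  assumes "finite A" "I \<sqsubseteq> A" "x \<in> A"
  shows "x \<in> I \<longleftrightarrow> position A x < card I"
proof
  have "finite I"
    using assms(1,2) finite_subset unfolding init_seg_def by blast
  then show "position A x < card I" if "x \<in> I"
    using position_init_seg[OF assms(2) that] position_less_card that by simp
next
  assume less: "position A x < card I"
  show "x \<in> I"
  proof (rule ccontr)
    assume "x \<notin> I"
    have "y < x" if "y \<in> I" for y
    proof (rule ccontr)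
      assume "\<not> y < x"
      then have "x < y"
        using \<open>x \<notin> I\<close> that by (metis linorder_neqE)
      then show False
        using assms(2,3) that \<open>x \<notin> I\<close> unfolding init_seg_def by blast
    qed
    then have "I \<subseteq> {y\<in>A. y < x}"
      using assms(2) unfolding init_seg_def by auto
    then have "card I \<le> position A x"
      unfolding position_def using assms(1) by (simp add: card_mono)
    then show False using less by simp
  qed
qed

section \<open>Ordered \<Delta>-systems\<close>

definition block :: "nat \<Rightarrow> nat \<Rightarrow> 'a::linorder set \<Rightarrow> nat \<Rightarrow> 'a set" where
  "block r d A i =
     {x\<in>A. position A x < r \<or> (r + i * d \<le> position A x \<and> position A x < r + Suc i * d)}"

lemma run_index_eq_div:
  fixes p :: nat
  assumes "r + i * d \<le> p" "p < r + Suc i * d"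
  shows "i = (p - r) div d"
  using assms by (intro div_nat_eqI[symmetric]) (auto simp: mult.commute)

lemma block_subset: "block r d A i \<subseteq> A"
  unfolding block_def by auto

lemma block_Int_block:
  assumes "i \<noteq> j"
  shows "block r d A i \<inter> block r d A j = {x\<in>A. position A x < r}"
proof
  show "block r d A i \<inter> block r d A j \<subseteq> {x\<in>A. position A x < r}"
    using assms run_index_eq_div[of r i d] run_index_eq_div[of r j d] unfolding block_def by auto
qed (auto simp: block_def)

lemma card_block:
  assumes "finite A" "r + Suc i * d \<le> card A"
  shows "card (block r d A i) = r + d"
proof -
  have "card (block r d A i) =
        card {p. p < card A \<and> (p < r \<or> (r + i * d \<le> p \<and> p < r + Suc i * d))}"
    unfolding block_def by (rule card_position_filter[OF assms(1)])
  also have "{p. p < card A \<and> (p < r \<or> (r + i * d \<le> p \<and> p < r + Suc i * d))}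
        = {..<r} \<union> {r + i * d..<r + Suc i * d}"
    using assms(2) by auto
  also have "card ({..<r} \<union> {r + i * d..<r + Suc i * d}) = r + d"
    by (subst card_Un_disjoint) auto
  finally show ?thesis .
qed

lemma UN_block:
  assumes "finite A" "card A = r + N * d" "0 < N"
  shows "(\<Union>i<N. block r d A i) = A"
proof
  show "A \<subseteq> (\<Union>i<N. block r d A i)"
  proof
    fix x assume x: "x \<in> A"
    define p where "p = position A x"
    have p_less: "p < r + N * d"
      using position_less_card[OF assms(1) x] assms(2) p_def by simp
    show "x \<in> (\<Union>i<N. block r d A i)"
    proof (cases "p < r")
      case True
      then show ?thesis using x assms(3) unfolding block_def p_def by auto
    next
      case False
      define i where "i = (p - r) div d"
      have "0 < d"
        using False p_less by (cases d) auto
      have "i * d \<le> p - r"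
        unfolding i_def by (simp add: div_times_less_eq_dividend)
      moreover have "p - r < Suc i * d"
        using dividend_less_div_times[OF \<open>0 < d\<close>, of "p - r"] unfolding i_def by simp
      ultimately have "x \<in> block r d A i"
        using x False unfolding block_def p_def by auto
      moreover have "i < N"
        using p_less False \<open>0 < d\<close> unfolding i_def by (simp add: div_less_iff_less_mult)
      ultimately show ?thesis by blast
    qed
  qed
qed (use block_subset in blast)

definition ordered_delta_system :: "nat \<Rightarrow> nat \<Rightarrow> 'a::linorder set \<Rightarrow> (nat \<Rightarrow> 'a set) \<Rightarrow> bool"
  where
  "ordered_delta_system N r A G \<longleftrightarrow>
     A = (\<Union>i<N. G i) \<and>
     (\<exists>R. card R = r \<and>
          (\<forall>i<N. \<forall>j<N. i \<noteq> j \<longrightarrow> G i \<inter> G j = R) \<and>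
          R <\<^sub>s G 0 - R \<and>
          (\<forall>i. Suc i < N \<longrightarrow> G i - R <\<^sub>s G (Suc i) - R))"

lemma is_decomposition_iff:
  "is_decomposition F k n r A G \<longleftrightarrow>
     (\<forall>i<n (Suc k). G i \<in> level F k) \<and> ordered_delta_system (n (Suc k)) (r (Suc k)) A G"
  unfolding is_decomposition_def ordered_delta_system_def by blast

lemma ordered_delta_system_block:
  assumes "finite A" "card A = r + N * d" "0 < N"
  shows "ordered_delta_system N r A (block r d A)"
  unfolding ordered_delta_system_def
proof (intro conjI exI)
  define R where "R = {x\<in>A. position A x < r}"
  have "card R = card {p. p < card A \<and> p < r}"
    unfolding R_def by (rule card_position_filter[OF assms(1)])
  also have "{p. p < card A \<and> p < r} = {..<r}"
    using assms(2) by auto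
  finally show "card R = r" by simp
  show "\<forall>i<N. \<forall>j<N. i \<noteq> j \<longrightarrow> block r d A i \<inter> block r d A j = R"
    unfolding R_def using block_Int_block by blast
  have less: "x < y" if "x \<in> A" "y \<in> A" "position A x < position A y" for x y
    using position_less_iff[OF assms(1) that(1,2)] that(3) by simp
  show "R <\<^sub>s block r d A 0 - R"
    unfolding set_less_def R_def block_def by (auto intro: less)
  show "\<forall>i. Suc i < N \<longrightarrow> block r d A i - R <\<^sub>s block r d A (Suc i) - R"
    unfolding set_less_def R_def block_def by (auto intro: less)
qed (use UN_block[OF assms] in simp)

lemma set_less_trans:
  assumes "A <\<^sub>s B" "B <\<^sub>s C" "B \<noteq> {}"
  shows "(A::'a::linorder set) <\<^sub>s C"
  using assms unfolding set_less_def by (meson all_not_in_conv less_trans)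

lemma set_less_chain:
  assumes chain: "\<forall>i. Suc i < N \<longrightarrow> B i <\<^sub>s B (Suc i)" and nonempty: "\<forall>i<N. B i \<noteq> {}"
    and "a < b" "b < N"
  shows "B a <\<^sub>s B b"
  using assms(3,4)
proof (induction b)
  case (Suc b)
  then show ?case
    using chain nonempty set_less_trans[of "B a" "B b" "B (Suc b)"]
    by (cases "a = b") auto
qed simp

lemma set_less_disjoint: "(A::'a::linorder set) <\<^sub>s B \<Longrightarrow> A \<inter> B = {}"
  unfolding set_less_def by blast

lemma init_seg_prefix:
  fixes R :: "'a::linorder set" and N :: nat
  assumes A_eq: "A = R \<union> (\<Union>a<N. B a)"
    and R_less: "\<forall>a<N. R <\<^sub>s B a" and B_less: "\<forall>a b. a < b \<longrightarrow> b < N \<longrightarrow> B a <\<^sub>s B b"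
    and "j \<le> N"
  shows "R \<union> (\<Union>a<j. B a) \<sqsubseteq> A"
  unfolding init_seg_def
proof (intro conjI ballI impI)
  show "R \<union> (\<Union>a<j. B a) \<subseteq> A"
    unfolding A_eq using \<open>j \<le> N\<close> by (auto intro: order.strict_trans2)
next
  fix y x assume y: "y \<in> A" and x: "x \<in> R \<union> (\<Union>a<j. B a)" and "y < x"
  show "y \<in> R \<union> (\<Union>a<j. B a)"
  proof (rule ccontr)
    assume y_notin: "y \<notin> R \<union> (\<Union>a<j. B a)"
    then obtain b where "b < N" "y \<in> B b"
      using y unfolding A_eq by blast
    have "j \<le> b"
      using y_notin \<open>y \<in> B b\<close> by (auto simp: not_le)
    have "x < y"
    proof (cases "x \<in> R")
      case True
      then show ?thesis
        using R_less \<open>b < N\<close> \<open>y \<in> B b\<close> unfolding set_less_def by blast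
    next
      case False
      then obtain a where "a < j" "x \<in> B a"
        using x by blast
      then have "B a <\<^sub>s B b"
        using B_less \<open>j \<le> b\<close> \<open>b < N\<close> by simp
      then show ?thesis
        using \<open>x \<in> B a\<close> \<open>y \<in> B b\<close> unfolding set_less_def by blast
    qed
    then show False using \<open>y < x\<close> by simp
  qed
qed

lemma mem_prefix_iff_position_less:
  fixes R :: "'a::linorder set" and N :: nat
  assumes "finite A" and A_eq: "A = R \<union> (\<Union>a<N. B a)"
    and R_less: "\<forall>a<N. R <\<^sub>s B a" and B_less: "\<forall>a b. a < b \<longrightarrow> b < N \<longrightarrow> B a <\<^sub>s B b"
    and card_R: "card R = r" and card_B: "\<forall>a<N. card (B a) = d"
    and "j \<le> N" "x \<in> A"
  shows "x \<in> R \<union> (\<Union>a<j. B a) \<longleftrightarrow> position A x < r + j * d"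
proof -
  have finite_R: "finite R" and finite_B: "\<forall>a<N. finite (B a)"
    using \<open>finite A\<close> unfolding A_eq by auto
  have "card (\<Union>a<j. B a) = (\<Sum>a<j. card (B a))"
  proof (rule card_UN_disjoint)
    show "\<forall>a\<in>{..<j}. \<forall>b\<in>{..<j}. a \<noteq> b \<longrightarrow> B a \<inter> B b = {}"
      using B_less set_less_disjoint \<open>j \<le> N\<close>
      by (metis Int_commute lessThan_iff linorder_neqE_nat order.strict_trans2)
  qed (use finite_B \<open>j \<le> N\<close> in auto)
  also have "\<dots> = j * d"
    using card_B \<open>j \<le> N\<close> by simp
  moreover have "R \<inter> (\<Union>a<j. B a) = {}"
  proof -
    have "R \<inter> B a = {}" if "a < j" for a
      using R_less that \<open>j \<le> N\<close> by (intro set_less_disjoint) simp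
    then show ?thesis by blast
  qed
  ultimately have "card (R \<union> (\<Union>a<j. B a)) = r + j * d"
    using card_Un_disjoint[OF finite_R] finite_B \<open>j \<le> N\<close> card_R by simp
  then show ?thesis
    using mem_init_seg_iff_position_less[OF assms(1) init_seg_prefix[OF A_eq R_less B_less] \<open>x \<in> A\<close>]
      \<open>j \<le> N\<close> by simp
qed

lemma ordered_delta_system_root:
  fixes A :: "'a::linorder set"
  assumes "finite A" "2 \<le> N" "0 < d" "ordered_delta_system N r A G"
    and card_G: "\<forall>i<N. card (G i) = r + d"
  obtains R where "card R = r" "\<forall>a<N. R \<subseteq> G a" "\<forall>a<N. card (G a - R) = d"
    "\<forall>a<N. R <\<^sub>s G a - R" "\<forall>a b. a < b \<longrightarrow> b < N \<longrightarrow> G a - R <\<^sub>s G b - R"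
proof -
  obtain R where A_eq: "A = (\<Union>i<N. G i)" and card_R: "card R = r"
    and inter: "\<forall>i<N. \<forall>j<N. i \<noteq> j \<longrightarrow> G i \<inter> G j = R"
    and R_less: "R <\<^sub>s G 0 - R" and chain: "\<forall>i. Suc i < N \<longrightarrow> G i - R <\<^sub>s G (Suc i) - R"
    using assms(4) unfolding ordered_delta_system_def by blast
  have R_sub: "R \<subseteq> G a" if "a < N" for a
  proof -
    have "(if a = 0 then 1 else 0) < N" "a \<noteq> (if a = 0 then 1 else 0)"
      using assms(2) by auto
    then show ?thesis
      using inter that by blast
  qed
  have card_petal: "card (G a - R) = d" if "a < N" for a
  proof -
    have "finite (G a)"
      using finite_subset[OF _ assms(1)] that unfolding A_eq by blast
    then have "card (G a - R) = card (G a) - card R"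
      using card_Diff_subset[OF finite_subset[OF R_sub]] R_sub that by blast
    then show ?thesis using card_G card_R that by simp
  qed
  have petal_less: "G a - R <\<^sub>s G b - R" if "a < b" "b < N" for a b
    using set_less_chain[of N "\<lambda>a. G a - R", OF _ _ that] chain card_petal assms(3) by fastforce
  have R_less_petal: "R <\<^sub>s G a - R" if "a < N" for a
  proof (cases "a = 0")
    case False
    have "card (G 0 - R) = d"
      using card_petal that by simp
    then have "G 0 - R \<noteq> {}"
      using assms(3) by (intro notI) simp
    then show ?thesis
      using set_less_trans[OF R_less petal_less[of 0 a]] False that by simp
  qed (use R_less in simp)
  show thesis
    using that card_R R_sub card_petal R_less_petal petal_less by blast
qed

lemma ordered_delta_system_eq_block:
  fixes A :: "'a::linorder set"
  assumes "finite A" "2 \<le> N" "0 < d" "ordered_delta_system N r A G"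
    and "\<forall>i<N. card (G i) = r + d" and "i < N"
  shows "G i = block r d A i"
proof -
  obtain R where card_R: "card R = r" and R_sub: "\<forall>a<N. R \<subseteq> G a"
    and card_petal: "\<forall>a<N. card (G a - R) = d" and R_less_petal: "\<forall>a<N. R <\<^sub>s G a - R"
    and petal_less: "\<forall>a b. a < b \<longrightarrow> b < N \<longrightarrow> G a - R <\<^sub>s G b - R"
    using ordered_delta_system_root[OF assms(1-5)] by blast
  define S where "S j = R \<union> (\<Union>a<j. G a - R)" for j
  have "A = (\<Union>a<N. G a)"
    using assms(4) unfolding ordered_delta_system_def by blast
  moreover have "R \<subseteq> G 0" "0 \<in> {..<N}"
    using R_sub assms(2) by auto
  ultimately have A_eq: "A = S N"
    unfolding S_def by blast
  have S_iff: "x \<in> S j \<longleftrightarrow> position A x < r + j * d" if "j \<le> N" "x \<in> A" for j x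
    unfolding S_def
    by (rule mem_prefix_iff_position_less[OF assms(1) A_eq[unfolded S_def] R_less_petal petal_less card_R card_petal that])
  have "(G a - R) \<inter> (G i - R) = {}" if "a < i" for a
    using petal_less that \<open>i < N\<close> by (intro set_less_disjoint) simp
  then have "(G i - R) \<inter> S i = {}"
    unfolding S_def by blast
  then have "G i = A \<inter> (S 0 \<union> (S (Suc i) - S i))"
    using R_sub \<open>i < N\<close> unfolding A_eq S_def by (auto simp: lessThan_Suc)
  then show ?thesis
    using S_iff[of 0] S_iff[of i] S_iff[of "Suc i"] \<open>i < N\<close> unfolding block_def by auto
qed

lemma init_seg_Int_block:
  assumes "finite E" "E \<inter> A \<sqsubseteq> E" "E \<inter> A \<sqsubseteq> A"
  shows "block r d E i \<inter> block r d A j \<sqsubseteq> block r d E i"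
  unfolding init_seg_def
proof (intro conjI ballI impI)
  fix b a assume b: "b \<in> block r d E i" and a: "a \<in> block r d E i \<inter> block r d A j" and "b < a"
  have "a \<in> E \<inter> A"
    using a block_subset by blast
  moreover have "b \<in> E"
    using b block_subset by blast
  ultimately have "b \<in> E \<inter> A"
    using assms(2) \<open>b < a\<close> unfolding init_seg_def by blast
  have pos_a: "position A a = position E a"
    using position_init_seg[OF assms(3) \<open>a \<in> E \<inter> A\<close>] position_init_seg[OF assms(2) \<open>a \<in> E \<inter> A\<close>]
    by simp
  have pos_b: "position A b = position E b"
    using position_init_seg[OF assms(3) \<open>b \<in> E \<inter> A\<close>] position_init_seg[OF assms(2) \<open>b \<in> E \<inter> A\<close>]
    by simp
  have "b \<in> block r d A j"
  proof (cases "i = j")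
    case True
    then show ?thesis
      using b pos_b \<open>b \<in> E \<inter> A\<close> unfolding block_def by auto
  next
    case False
    have "position E a < r"
      using a pos_a False run_index_eq_div[of r i d "position E a"] run_index_eq_div[of r j d "position E a"]
      unfolding block_def by auto
    moreover have "position E b < position E a"
      using position_less_position[OF assms(1) \<open>b \<in> E\<close> \<open>b < a\<close>] .
    ultimately show ?thesis
      using pos_b \<open>b \<in> E \<inter> A\<close> unfolding block_def by auto
  qed
  then show "b \<in> block r d E i \<inter> block r d A j"
    using b by blast
qed blast

lemma eq_if_init_seg_Int_Max:
  assumes "E \<inter> P \<sqsubseteq> E" "Max E \<in> P" "finite E" "E \<noteq> {}" "finite P" "card P \<le> card E"
  shows "E = P"
proof -
  have "E \<subseteq> P"
  proof
    fix z assume "z \<in> E"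
    then have "z < Max E \<or> z = Max E"
      using Max_ge[OF assms(3)] by (metis le_less)
    moreover have "Max E \<in> E \<inter> P"
      using assms(2-4) by simp
    ultimately show "z \<in> P"
      using assms(1) \<open>z \<in> E\<close> unfolding init_seg_def by blast
  qed
  then show ?thesis
    using card_seteq[OF assms(5) _ assms(6)] by simp
qed

lemma fsrank_eq_graded:
  fixes g :: "nat \<Rightarrow> nat"
  assumes "strict_mono g"
    and finite: "\<And>A. A \<in> F \<Longrightarrow> finite A"
    and graded: "\<And>A. A \<in> F \<Longrightarrow> \<exists>j. card A = g j"
    and predecessor: "\<And>A j. A \<in> F \<Longrightarrow> card A = g (Suc j) \<Longrightarrow> \<exists>B\<in>F. B \<subset> A \<and> card B = g j"
    and "A \<in> F" "card A = g j"
  shows "fsrank F A = j"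
  using assms(5,6)
proof (induction j arbitrary: A rule: less_induct)
  case (less j)
  define S where "S = (\<lambda>B. Suc (fsrank F B)) ` {B. B \<in> F \<and> B \<subset> A}"
  have rank_A: "fsrank F A = Sup S"
    unfolding S_def using finite[OF less.prems(1)] by (subst fsrank.simps) simp
  have S_le: "s \<le> j" if s: "s \<in> S" for s
  proof -
    obtain B where B: "B \<in> F" "B \<subset> A" "s = Suc (fsrank F B)"
      using s unfolding S_def by blast
    obtain i where i: "card B = g i"
      using graded[OF B(1)] by blast
    have "g i < g j"
      using psubset_card_mono[OF finite[OF less.prems(1)] B(2)] i less.prems(2) by simp
    then have "i < j"
      using strict_mono_less[OF assms(1)] by blast
    then show ?thesis
      using less.IH[OF _ B(1) i] B(3) by simp
  qed
  show ?case
  proof (cases j)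
    case 0
    then have "S = {}"
      using S_le unfolding S_def by fastforce
    then show ?thesis
      using rank_A 0 by simp
  next
    case (Suc i)
    obtain B where B: "B \<in> F" "B \<subset> A" "card B = g i"
      using predecessor less.prems Suc by blast
    then have "Suc (fsrank F B) \<in> S"
      unfolding S_def by blast
    moreover have "fsrank F B = i"
      using less.IH[of i B] B Suc by simp
    ultimately have "j \<in> S"
      using Suc by simp
    then show ?thesis
      using rank_A S_le by (simp add: cSup_eq_maximum)
  qed
qed

lemma mem_level_fsrank: "A \<in> F \<Longrightarrow> A \<in> level F (fsrank F A)"
  unfolding level_def by simp

lemma scheme_member_subset: "construction_scheme X m n r F \<Longrightarrow> A \<in> F \<Longrightarrow> A \<subseteq> X"
  unfolding construction_scheme_def by auto

lemma scheme_member_finite: "construction_scheme X m n r F \<Longrightarrow> A \<in> F \<Longrightarrow> finite A"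
  unfolding construction_scheme_def by auto

lemma card_scheme_level: "construction_scheme X m n r F \<Longrightarrow> A \<in> level F k \<Longrightarrow> card A = m k"
  unfolding construction_scheme_def by (elim conjE) simp

lemma scheme_level_coherent:
  "construction_scheme X m n r F \<Longrightarrow> E \<in> level F k \<Longrightarrow> A \<in> level F k \<Longrightarrow> E \<inter> A \<sqsubseteq> E"
  unfolding construction_scheme_def by (elim conjE) simp

lemma scheme_level_decomposition:
  "construction_scheme X m n r F \<Longrightarrow> A \<in> level F (Suc k) \<Longrightarrow> \<exists>G. is_decomposition F k n r A G"
  unfolding construction_scheme_def by (elim conjE) metis

lemma scheme_covers:
  "construction_scheme X m n r F \<Longrightarrow> A \<subseteq> X \<Longrightarrow> finite A \<Longrightarrow> \<exists>B\<in>F. A \<subseteq> B"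
  unfolding construction_scheme_def by (elim conjE) simp

lemma scheme_base_mem:
  assumes "construction_scheme X m n r F" "finite X"
  shows "X \<in> F"
proof -
  obtain B where "B \<in> F" "X \<subseteq> B"
    using scheme_covers[OF assms(1) order_refl assms(2)] by blast
  then show ?thesis
    using scheme_member_subset[OF assms(1)] by (metis subset_antisym)
qed

lemma card_scheme_base:
  assumes "construction_scheme X m n r F" "finite X"
  shows "card X = m (fsrank F X)"
  using card_scheme_level[OF assms(1) mem_level_fsrank[OF scheme_base_mem[OF assms]]] .

locale construction_type =
  fixes m n r :: "nat \<Rightarrow> nat"
  assumes is_type: "is_type m n r"
begin

lemma m_0: "m 0 = 1"
  using is_type unfolding is_type_def by simp

lemma n_ge_2: "2 \<le> n (Suc k)"
  using is_type unfolding is_type_def by simp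

lemma r_less_m: "r (Suc k) < m k"
  using is_type unfolding is_type_def by simp

lemma m_Suc: "m (Suc k) = r (Suc k) + n (Suc k) * (m k - r (Suc k))"
  using is_type unfolding is_type_def by (simp add: mult.commute)

lemma strict_mono_m: "strict_mono m"
proof (rule strict_mono_Suc_iff[THEN iffD2], intro allI)
  fix k
  have "1 * (m k - r (Suc k)) < n (Suc k) * (m k - r (Suc k))"
    using n_ge_2[of k] r_less_m[of k] by (intro mult_less_mono1) auto
  then show "m k < m (Suc k)"
    using m_Suc[of k] r_less_m[of k] by linarith
qed

lemma m_pos: "0 < m k"
  using strict_mono_less_eq[OF strict_mono_m, of 0 k] m_0 by simp

abbreviation piece :: "nat \<Rightarrow> 'a::linorder set \<Rightarrow> nat \<Rightarrow> 'a set" where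
  "piece k A i \<equiv> block (r (Suc k)) (m k - r (Suc k)) A i"

lemma card_piece:
  assumes "finite A" "card A = m (Suc k)" "i < n (Suc k)"
  shows "card (piece k A i) = m k"
proof -
  have "Suc i * (m k - r (Suc k)) \<le> n (Suc k) * (m k - r (Suc k))"
    using assms(3) by (intro mult_le_mono1) simp
  then have "r (Suc k) + Suc i * (m k - r (Suc k)) \<le> card A"
    using assms(2) m_Suc[of k] by linarith
  then show ?thesis
    using card_block[OF assms(1)] r_less_m[of k] by simp
qed

lemma UN_piece:
  assumes "finite A" "card A = m (Suc k)"
  shows "(\<Union>i<n (Suc k). piece k A i) = A"
  using UN_block[OF assms(1)] assms(2) m_Suc[of k] n_ge_2[of k] by simp

lemma piece_psubset:
  assumes "finite A" "card A = m (Suc k)" "i < n (Suc k)"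
  shows "piece k A i \<subset> A"
  using block_subset card_piece[OF assms] assms(2) strict_mono_less[OF strict_mono_m, of k "Suc k"]
  by fastforce

lemma ordered_delta_system_piece:
  assumes "finite A" "card A = m (Suc k)"
  shows "ordered_delta_system (n (Suc k)) (r (Suc k)) A (piece k A)"
  using ordered_delta_system_block[OF assms(1)] assms(2) m_Suc[of k] n_ge_2[of k] by simp

lemma decomposition_eq_piece:
  assumes "is_decomposition F k n r A G" "\<And>B. B \<in> level F k \<Longrightarrow> card B = m k"
    and "finite A" "i < n (Suc k)"
  shows "G i = piece k A i"
proof (rule ordered_delta_system_eq_block[OF assms(3) n_ge_2])
  show "0 < m k - r (Suc k)"
    using r_less_m[of k] by simp
  show "ordered_delta_system (n (Suc k)) (r (Suc k)) A G"
    using assms(1) unfolding is_decomposition_iff by blast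
  show "\<forall>i<n (Suc k). card (G i) = r (Suc k) + (m k - r (Suc k))"
    using assms(1,2) r_less_m[of k] unfolding is_decomposition_iff by fastforce
qed (rule assms(4))

definition pieces :: "nat \<Rightarrow> 'a::linorder set set \<Rightarrow> 'a set set" where
  "pieces k S = {piece k A i | A i. A \<in> S \<and> i < n (Suc k)}"

lemma Union_pieces:
  assumes "\<And>A. A \<in> S \<Longrightarrow> finite A \<and> card A = m (Suc k)"
  shows "\<Union>(pieces k S) = \<Union>S"
proof -
  have "\<Union>(pieces k S) = (\<Union>A\<in>S. \<Union>i<n (Suc k). piece k A i)"
    unfolding pieces_def by blast
  also have "\<dots> = (\<Union>A\<in>S. A)"
    by (rule SUP_cong) (use UN_piece assms in auto)
  finally show ?thesis by simp
qed

lemma scheme_pieces_subset_level: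
  assumes S: "construction_scheme X m n r F"
  shows "pieces j (level F (Suc j)) \<subseteq> level F j"
proof
  fix P assume "P \<in> pieces j (level F (Suc j))"
  then obtain A i where P: "P = piece j A i" "A \<in> level F (Suc j)" "i < n (Suc j)"
    unfolding pieces_def by blast
  obtain G where G: "is_decomposition F j n r A G"
    using scheme_level_decomposition[OF S P(2)] by blast
  have "finite A"
    using scheme_member_finite[OF S] P(2) unfolding level_def by blast
  then have "G i = piece j A i"
    using decomposition_eq_piece[OF G card_scheme_level[OF S] _ P(3)] by blast
  moreover have "G i \<in> level F j"
    using G P(3) unfolding is_decomposition_def by blast
  ultimately show "P \<in> level F j"
    using P(1) by simp
qed

lemma scheme_level_eq_pieces:
  assumes S: "construction_scheme X m n r F" and cover: "\<Union>(level F (Suc j)) = X"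
  shows "level F j = pieces j (level F (Suc j))"
proof
  have finite_level: "finite A" if "A \<in> level F k" for A k
    using scheme_member_finite[OF S] that unfolding level_def by blast
  show "level F j \<subseteq> pieces j (level F (Suc j))"
  proof
    fix E assume E: "E \<in> level F j"
    have "finite E" "card E = m j"
      using finite_level[OF E] card_scheme_level[OF S E] by auto
    then have "E \<noteq> {}"
      using m_pos[of j] by auto
    moreover have "E \<subseteq> X"
      using E scheme_member_subset[OF S] unfolding level_def by blast
    ultimately have "Max E \<in> X"
      using Max_in[OF \<open>finite E\<close>] by blast
    moreover have "\<Union>(pieces j (level F (Suc j))) = X"
      using Union_pieces[of "level F (Suc j)" j] cover finite_level card_scheme_level[OF S] by blast
    ultimately obtain P where P: "P \<in> pieces j (level F (Suc j))" "Max E \<in> P"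
      by blast
    then have "P \<in> level F j"
      using scheme_pieces_subset_level[OF S] by blast
    have "E = P"
    proof (rule eq_if_init_seg_Int_Max)
      show "E \<inter> P \<sqsubseteq> E"
        using scheme_level_coherent[OF S E \<open>P \<in> level F j\<close>] .
      show "card P \<le> card E"
        using card_scheme_level[OF S \<open>P \<in> level F j\<close>] \<open>card E = m j\<close> by simp
    qed (use P \<open>finite E\<close> \<open>E \<noteq> {}\<close> finite_level[OF \<open>P \<in> level F j\<close>] in auto)
    then show "E \<in> pieces j (level F (Suc j))"
      using P(1) by simp
  qed
qed (rule scheme_pieces_subset_level[OF S])

end

section \<open>The canonical scheme\<close>

locale construction_base = construction_type +
  fixes X :: "'a::linorder set" and K :: nat
  assumes finite_X: "finite X" and card_X: "card X = m K"
begin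

text \<open>Layers are indexed by depth below X: layer d turns out to be level K - d of every scheme.\<close>

primrec layer :: "nat \<Rightarrow> 'a set set" where
  "layer 0 = {X}"
| "layer (Suc d) = pieces (K - Suc d) (layer d)"

definition canonical :: "'a set set" where
  "canonical = (\<Union>d\<le>K. layer d)"

lemma layer_subset_card:
  assumes "d \<le> K" "A \<in> layer d"
  shows "A \<subseteq> X \<and> card A = m (K - d)"
  using assms
proof (induction d arbitrary: A)
  case 0
  then show ?case using card_X by simp
next
  case (Suc d)
  define k where "k = K - Suc d"
  have k: "Suc k = K - d"
    using Suc.prems(1) unfolding k_def by simp
  obtain B i where A: "A = piece k B i" "B \<in> layer d" "i < n (Suc k)"
    using Suc.prems(2) unfolding layer.simps pieces_def k_def by blast
  have "B \<subseteq> X" "card B = m (Suc k)"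
    using Suc.IH[OF _ A(2)] Suc.prems(1) k by auto
  moreover have "finite B"
    using \<open>B \<subseteq> X\<close> finite_X finite_subset by blast
  moreover have "A \<subseteq> B"
    unfolding A(1) by (rule block_subset)
  ultimately have "A \<subseteq> X" "card A = m k"
    using card_piece[OF _ _ A(3)] A(1) by auto
  then show ?case
    unfolding k_def by simp
qed

lemma finite_layer: "d \<le> K \<Longrightarrow> A \<in> layer d \<Longrightarrow> finite A"
  using layer_subset_card finite_X finite_subset by blast

lemma Union_layer: "d \<le> K \<Longrightarrow> \<Union>(layer d) = X"
proof (induction d)
  case (Suc d)
  have "\<Union>(pieces (K - Suc d) (layer d)) = \<Union>(layer d)"
  proof (rule Union_pieces)
    fix A assume "A \<in> layer d"
    moreover have "Suc (K - Suc d) = K - d"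
      using Suc.prems by simp
    moreover have "d \<le> K"
      using Suc.prems by simp
    ultimately show "finite A \<and> card A = m (Suc (K - Suc d))"
      using finite_layer layer_subset_card by simp
  qed
  then show ?case
    using Suc by simp
qed simp

lemma piece_mem_layer:
  assumes "d < K" "A \<in> layer d" "i < n (Suc (K - Suc d))"
  shows "piece (K - Suc d) A i \<in> layer (Suc d)"
  using assms unfolding layer.simps pieces_def by blast

lemma canonical_predecessor:
  assumes B: "B \<in> canonical" "card B = m (Suc j)"
  shows "\<exists>C\<in>canonical. C \<subset> B \<and> card C = m j"
proof -
  obtain e where e: "e \<le> K" "B \<in> layer e"
    using B(1) unfolding canonical_def by blast
  then have "m (K - e) = m (Suc j)"
    using layer_subset_card B(2) by simp
  then have "K - e = Suc j"
    using strict_mono_eq[OF strict_mono_m] by simp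
  then have "e < K" "K - Suc e = j"
    by auto
  have "0 < n (Suc j)"
    using n_ge_2[of j] by simp
  then have "piece j B 0 \<in> layer (Suc e)"
    using piece_mem_layer[OF \<open>e < K\<close> e(2)] \<open>K - Suc e = j\<close> by simp
  moreover have "Suc e \<in> {..K}"
    using \<open>e < K\<close> by simp
  ultimately have "piece j B 0 \<in> canonical"
    unfolding canonical_def by blast
  moreover have "piece j B 0 \<subset> B" "card (piece j B 0) = m j"
    using finite_layer[OF e] piece_psubset[OF _ B(2) \<open>0 < n (Suc j)\<close>]
      card_piece[OF _ B(2) \<open>0 < n (Suc j)\<close>] by auto
  ultimately show ?thesis
    by blast
qed

lemma fsrank_canonical:
  assumes "d \<le> K" "A \<in> layer d"
  shows "fsrank canonical A = K - d"
proof (rule fsrank_eq_graded[OF strict_mono_m _ _ canonical_predecessor])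
  show "finite B" if B: "B \<in> canonical" for B
  proof -
    obtain e where "e \<le> K" "B \<in> layer e"
      using B unfolding canonical_def by blast
    then show ?thesis by (rule finite_layer)
  qed
  show "\<exists>j. card B = m j" if B: "B \<in> canonical" for B
  proof -
    obtain e where "e \<le> K" "B \<in> layer e"
      using B unfolding canonical_def by blast
    then show ?thesis
      using layer_subset_card by blast
  qed
  show "A \<in> canonical"
    using assms unfolding canonical_def by blast
  show "card A = m (K - d)"
    using layer_subset_card assms by blast
qed

lemma mem_level_canonical_iff: "A \<in> level canonical k \<longleftrightarrow> k \<le> K \<and> A \<in> layer (K - k)"
proof
  assume "A \<in> level canonical k"
  then obtain d where d: "d \<le> K" "A \<in> layer d" "fsrank canonical A = k"
    unfolding level_def canonical_def by blast
  then have "k = K - d"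
    using fsrank_canonical[OF d(1,2)] by simp
  then show "k \<le> K \<and> A \<in> layer (K - k)"
    using d(1,2) by (simp add: diff_diff_cancel)
next
  assume k: "k \<le> K \<and> A \<in> layer (K - k)"
  then have "A \<in> canonical"
    unfolding canonical_def by (metis UN_iff atMost_iff diff_le_self)
  moreover have "fsrank canonical A = k"
    using fsrank_canonical[of "K - k" A] k by simp
  ultimately show "A \<in> level canonical k"
    unfolding level_def by simp
qed

lemma layer_coherent:
  assumes "d \<le> K" "E \<in> layer d" "A \<in> layer d"
  shows "E \<inter> A \<sqsubseteq> E"
  using assms
proof (induction d arbitrary: E A)
  case 0
  then show ?case by (simp add: init_seg_def)
next
  case (Suc d)
  obtain E' i where E: "E = piece (K - Suc d) E' i" "E' \<in> layer d"
    using Suc.prems(2) unfolding layer.simps pieces_def by blast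
  obtain A' j where A: "A = piece (K - Suc d) A' j" "A' \<in> layer d"
    using Suc.prems(3) unfolding layer.simps pieces_def by blast
  have "E' \<inter> A' \<sqsubseteq> E'" "A' \<inter> E' \<sqsubseteq> A'"
    using Suc.IH E(2) A(2) Suc.prems(1) by auto
  then have coherent: "E' \<inter> A' \<sqsubseteq> E'" "E' \<inter> A' \<sqsubseteq> A'"
    by (simp_all only: Int_commute)
  have "finite E'"
    using finite_layer[OF _ E(2)] Suc.prems(1) by simp
  then show ?case
    unfolding E(1) A(1) by (rule init_seg_Int_block[OF _ coherent])
qed

lemma decomposition_canonical:
  assumes "Suc k \<le> K" "A \<in> layer (K - Suc k)"
  shows "is_decomposition canonical k n r A (piece k A)"
  unfolding is_decomposition_iff
proof
  have "K - Suc (K - Suc k) = k" "Suc (K - Suc k) = K - k"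
    using assms(1) by auto
  then show "\<forall>i<n (Suc k). piece k A i \<in> level canonical k"
    using piece_mem_layer[of "K - Suc k" A] assms mem_level_canonical_iff by auto
  show "ordered_delta_system (n (Suc k)) (r (Suc k)) A (piece k A)"
  proof (rule ordered_delta_system_piece)
    show "finite A"
      using finite_layer[OF _ assms(2)] by simp
    show "card A = m (Suc k)"
      using layer_subset_card[OF _ assms(2)] assms(1) by simp
  qed
qed

lemma card_level_canonical:
  assumes "A \<in> level canonical k"
  shows "card A = m k"
proof -
  have "k \<le> K" "A \<in> layer (K - k)"
    using assms unfolding mem_level_canonical_iff by auto
  then show ?thesis
    using layer_subset_card[of "K - k" A] by simp
qed

theorem construction_scheme_canonical: "construction_scheme X m n r canonical"
  unfolding construction_scheme_def
proof (intro conjI allI ballI impI)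
  show "canonical \<subseteq> {A. A \<subseteq> X \<and> finite A}"
    unfolding canonical_def using layer_subset_card finite_layer by blast
  show "\<exists>B\<in>canonical. A \<subseteq> B" if "A \<subseteq> X \<and> finite A" for A
  proof
    show "X \<in> canonical"
      unfolding canonical_def by force
  qed (use that in blast)
  fix k
  show "card A = m k" if "A \<in> level canonical k" for A
    using that by (rule card_level_canonical)
  show "E \<inter> A \<sqsubseteq> E" if "E \<in> level canonical k" "A \<in> level canonical k" for E A
    using that layer_coherent[of "K - k" E A] unfolding mem_level_canonical_iff by simp
  show "E \<inter> A \<sqsubseteq> A" if "E \<in> level canonical k" "A \<in> level canonical k" for E A
    using that layer_coherent[of "K - k" A E] unfolding mem_level_canonical_iff by (simp add: Int_commute)
  show "\<exists>G. is_decomposition canonical k n r A G \<and>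
          (\<forall>G'. is_decomposition canonical k n r A G' \<longrightarrow> (\<forall>i<n (Suc k). G' i = G i))"
    if A: "A \<in> level canonical (Suc k)" for A
  proof (intro exI conjI allI impI)
    have "Suc k \<le> K" "A \<in> layer (K - Suc k)"
      using A unfolding mem_level_canonical_iff by auto
    then show "is_decomposition canonical k n r A (piece k A)"
      by (rule decomposition_canonical)
    fix G' i assume "is_decomposition canonical k n r A G'" "i < n (Suc k)"
    moreover have "finite A"
      using finite_layer[OF _ \<open>A \<in> layer (K - Suc k)\<close>] by simp
    ultimately show "G' i = piece k A i"
      using decomposition_eq_piece card_level_canonical by blast
  qed
qed

subsection \<open>Uniqueness\<close>

lemma scheme_level_top:
  assumes S: "construction_scheme X m n r F"
  shows "level F K = {X}"
proof
  have "m (fsrank F X) = m K"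
    using card_scheme_base[OF S finite_X] card_X by simp
  then have "fsrank F X = K"
    using strict_mono_eq[OF strict_mono_m] by simp
  then show "{X} \<subseteq> level F K"
    using mem_level_fsrank[OF scheme_base_mem[OF S finite_X]] by simp
  show "level F K \<subseteq> {X}"
  proof
    fix A assume A: "A \<in> level F K"
    then have "A \<subseteq> X" "card A = card X"
      using scheme_member_subset[OF S] card_scheme_level[OF S] card_X unfolding level_def by auto
    then show "A \<in> {X}"
      using card_subset_eq[OF finite_X] by simp
  qed
qed

lemma scheme_level_eq_layer:
  assumes S: "construction_scheme X m n r F"
  shows "d \<le> K \<Longrightarrow> level F (K - d) = layer d"
proof (induction d)
  case 0
  then show ?case
    using scheme_level_top[OF S] by simp
next
  case (Suc d)
  have K: "K - d = Suc (K - Suc d)"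
    using Suc.prems by simp
  have "level F (K - Suc d) = pieces (K - Suc d) (level F (K - d))"
    unfolding K using scheme_level_eq_pieces[OF S] Suc Union_layer K by simp
  then show ?case
    using Suc by simp
qed

theorem scheme_eq_canonical:
  assumes S: "construction_scheme X m n r F"
  shows "F = canonical"
proof
  show "F \<subseteq> canonical"
  proof
    fix A assume "A \<in> F"
    define k where "k = fsrank F A"
    have A: "A \<in> level F k"
      unfolding k_def by (rule mem_level_fsrank[OF \<open>A \<in> F\<close>])
    have "m k \<le> m K"
      using card_mono[OF finite_X scheme_member_subset[OF S \<open>A \<in> F\<close>]]
        card_scheme_level[OF S A] card_X by simp
    then have "k \<le> K"
      using strict_mono_less_eq[OF strict_mono_m] by simp
    then show "A \<in> canonical"
      using A scheme_level_eq_layer[OF S, of "K - k"] mem_level_canonical_iff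
      unfolding canonical_def by auto
  qed
  show "canonical \<subseteq> F"
  proof
    fix A assume "A \<in> canonical"
    then obtain d where "d \<le> K" "A \<in> layer d"
      unfolding canonical_def by blast
    then have "A \<in> level F (K - d)"
      using scheme_level_eq_layer[OF S] by simp
    then show "A \<in> F"
      unfolding level_def by simp
  qed
qed

end

theorem mainTheorem18:
  fixes m n r :: "nat \<Rightarrow> nat" and X :: "'a::wellorder set"
  assumes "is_type m n r" and "finite X"
  shows "((\<exists>F. construction_scheme X m n r F) \<longleftrightarrow> (\<exists>k. card X = m k)) \<and>
         (\<forall>F F'. construction_scheme X m n r F \<and> construction_scheme X m n r F' \<longrightarrow> F = F')"
proof (intro conjI iffI allI impI)
  assume "\<exists>F. construction_scheme X m n r F"
  then show "\<exists>k. card X = m k"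
    using card_scheme_base[OF _ assms(2)] by blast
next
  assume "\<exists>k. card X = m k"
  then obtain K where "card X = m K" by blast
  then interpret construction_base m n r X K
    using assms by unfold_locales
  show "\<exists>F. construction_scheme X m n r F"
    using construction_scheme_canonical by blast
next
  fix F F' assume schemes: "construction_scheme X m n r F \<and> construction_scheme X m n r F'"
  then interpret construction_base m n r X "fsrank F X"
    using card_scheme_base assms by unfold_locales auto
  show "F = F'"
    using schemes scheme_eq_canonical[of F] scheme_eq_canonical[of F'] by simp
qed

end
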